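(* Let $\mathbf i\in\mathsf L^+$ and $\mathbf j\in\mathsf W^+$ with $\mathbf i\ge\mathbf j$, and assume $\mathbf i\neq\mathbf j$ if $|\mathbf i|$ is isotropic odd (i.e. $p(|\mathbf i|)=1$ and $(|\mathbf i|,|\mathbf i|)=0$). Then the concatenation $\mathbf i\mathbf j$ is dominant, i.e. $\mathbf i\mathbf j\in\mathsf W^+$.
   Context: Let $\mathfrak g$ be a basic Lie superalgebra with a fixed simple system $\Pi=\{\alpha_i\mid i\in I\}$, parity $p(i)\in\{0,1\}$, $Q^+=\bigoplus\mathbb Z_{\ge0}\alpha_i$ with parity $p(\sum c_i\alpha_i)=\sum c_ip(i)\bmod 2$, and $(\cdot,\cdot)$ the symmetric bilinear form with $(\alpha_i,\alpha_j)=d_ia_{ij}$ (symmetrized Cartan matrix). $\pi:=-1$, $q$ an indeterminate. $U_q$ is the positive half of the associated quantum supergroup (generated by $e_i$ of degree $\alpha_i$, parity $p(i)$). $\mathsf F$: the free associative $\mathbb Q(q)$-algebra on $I$ with basis the words $\mathbf i=(i_1,\dots,i_d)$, weight $|\mathbf i|=\sum\alpha_{i_s}$, parity $\sum p(i_s)$. Quantum shuffle product: $x\star\emptyset=\emptyset\star x=x$, $(xi)\star(yj)=(x\star(yj))i+\pi^{(p(x)+p(i))p(j)}q^{-(|x|+\alpha_i,\alpha_j)}((xi)\star y)j$ (homogeneous $x,y$, letters $i,j$, juxtaposition = concatenation). There is an injective algebra homomorphism $\Psi:U_q\to(\mathsf F,\star)$ with $\Psi(e_i)=i$; $\mathsf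 U:=\Psi(U_q)$ is the subalgebra generated by the letters. Fix a total order on $I$; order words lexicographically ($\mathbf i<\mathbf j$ if $\mathbf i$ is a proper prefix of $\mathbf j$ or at the first differing position $s$, $i_s<j_s$). $\max(x)$ is the largest word with nonzero coefficient in $x\neq0$. A word is dominant if it equals $\max(u)$ for some $u\in\mathsf U$; $\mathsf W^+$ is the set of dominant words. A nonempty word is Lyndon if it is smaller than all its proper right factors; $\mathsf L^+$ is the set of dominant Lyndon words. *)

theory Defs
  imports "HOL-Computational_Algebra.Polynomial" "HOL-Computational_Algebra.Fraction_Field"
begin

text \<open>Parity p :: 'i => bool (True = odd).
  Symmetrized Cartan matrix B i j = (alpha_i, alpha_j) :: int.\<close>

type_synonym qfield = "rat poly fract"

definition qvar :: qfield where
  "qvar = Fract [:0, 1:] 1"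

text \<open>Conditions on the Cartan datum satisfied by the symmetrized Cartan matrix of a
  basic Lie superalgebra with simple system.\<close>
definition super_cartan_datum :: "('i \<Rightarrow> bool) \<Rightarrow> ('i \<Rightarrow> 'i \<Rightarrow> int) \<Rightarrow> bool" where
  "super_cartan_datum p B \<longleftrightarrow>
     (\<forall>i j. B i j = B j i) \<and>
     (\<forall>i. B i i = 0 \<longrightarrow> p i) \<and>
     (\<forall>i j. B i i \<noteq> 0 \<and> i \<noteq> j \<longrightarrow>
        (\<exists>n::int. n \<le> 0 \<and> 2 * B i j = n * B i i \<and> (p i \<longrightarrow> even n)))"

text \<open>Elements of F: functions from words to Q(q) (finitely supported in practice).\<close>
type_synonym 'i felem = "'i list \<Rightarrow> qfield"

definition word_vec :: "'i list \<Rightarrow> 'i felem" where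
  "word_vec w = (\<lambda>v. if v = w then 1 else 0)"

text \<open>right multiplication (concatenation) by a letter, extended linearly\<close>
definition app_letter :: "'i felem \<Rightarrow> 'i \<Rightarrow> 'i felem" where
  "app_letter f i = (\<lambda>v. if v \<noteq> [] \<and> last v = i then f (butlast v) else 0)"

text \<open>number of odd letters in a word; parity of a word = parity of this number\<close>
definition nodd :: "('i \<Rightarrow> bool) \<Rightarrow> 'i list \<Rightarrow> nat" where
  "nodd p w = length (filter p w)"

definition form_wt_letter :: "('i \<Rightarrow> 'i \<Rightarrow> int) \<Rightarrow> 'i list \<Rightarrow> 'i \<Rightarrow> int" where
  "form_wt_letter B w j = sum_list (map (\<lambda>k. B k j) w)"

definition form_wt :: "('i \<Rightarrow> 'i \<Rightarrow> int) \<Rightarrow> 'i list \<Rightarrow> 'i list \<Rightarrow> int" where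
  "form_wt B w w' = sum_list (map (\<lambda>k. form_wt_letter B w k) w')"

text \<open>Quantum shuffle of two words, computed on the reversed words (so the recursion
  peels off last letters): shr (rev x) (rev y) = x * y.
  (x i) * (y j) = (x * (y j)) i + (-1)^((p(x)+p(i)) p(j)) q^(-(|x|+alpha_i, alpha_j)) ((x i) * y) j.\<close>
fun shr :: "('i \<Rightarrow> bool) \<Rightarrow> ('i \<Rightarrow> 'i \<Rightarrow> int) \<Rightarrow> 'i list \<Rightarrow> 'i list \<Rightarrow> 'i felem" where
  "shr p B [] ys = word_vec (rev ys)"
| "shr p B xs [] = word_vec (rev xs)"
| "shr p B (i # xs) (j # ys) =
     (\<lambda>v. app_letter (shr p B xs (j # ys)) i v
        + (if odd (nodd p (i # xs)) \<and> p j then -1 else 1)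
          * power_int qvar (- form_wt_letter B (i # xs) j)
          * app_letter (shr p B (i # xs) ys) j v)"

definition shuffle_word :: "('i \<Rightarrow> bool) \<Rightarrow> ('i \<Rightarrow> 'i \<Rightarrow> int) \<Rightarrow> 'i list \<Rightarrow> 'i list \<Rightarrow> 'i felem" where
  "shuffle_word p B x y = shr p B (rev x) (rev y)"

definition supp :: "'i felem \<Rightarrow> 'i list set" where
  "supp f = {w. f w \<noteq> 0}"

definition shuffle :: "('i \<Rightarrow> bool) \<Rightarrow> ('i \<Rightarrow> 'i \<Rightarrow> int) \<Rightarrow> 'i felem \<Rightarrow> 'i felem \<Rightarrow> 'i felem" where
  "shuffle p B f g = (\<lambda>w. \<Sum>x\<in>supp f. \<Sum>y\<in>supp g. f x * g y * shuffle_word p B x y w)"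

inductive_set Ualg :: "('i \<Rightarrow> bool) \<Rightarrow> ('i \<Rightarrow> 'i \<Rightarrow> int) \<Rightarrow> 'i felem set"
  for p B where
  unit: "word_vec [] \<in> Ualg p B"
| letter: "word_vec [i] \<in> Ualg p B"
| add: "f \<in> Ualg p B \<Longrightarrow> g \<in> Ualg p B \<Longrightarrow> (\<lambda>w. f w + g w) \<in> Ualg p B"
| smult: "f \<in> Ualg p B \<Longrightarrow> (\<lambda>w. c * f w) \<in> Ualg p B"
| mult: "f \<in> Ualg p B \<Longrightarrow> g \<in> Ualg p B \<Longrightarrow> shuffle p B f g \<in> Ualg p B"

text \<open>lexicographic order on words: proper prefix is smaller\<close>
definition word_less :: "'i::linorder list \<Rightarrow> 'i list \<Rightarrow> bool" where
  "word_less x y \<longleftrightarrow> (x, y) \<in> lexord {(a, b). a < b}"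

definition is_max_word :: "'i::linorder felem \<Rightarrow> 'i list \<Rightarrow> bool" where
  "is_max_word f w \<longleftrightarrow> finite (supp f) \<and> f w \<noteq> 0 \<and> (\<forall>v. f v \<noteq> 0 \<longrightarrow> v = w \<or> word_less v w)"

definition dominant :: "('i \<Rightarrow> bool) \<Rightarrow> ('i \<Rightarrow> 'i \<Rightarrow> int) \<Rightarrow> 'i::linorder list \<Rightarrow> bool" where
  "dominant p B w \<longleftrightarrow> (\<exists>u \<in> Ualg p B. u \<noteq> (\<lambda>_. 0) \<and> is_max_word u w)"

definition lyndon :: "'i::linorder list \<Rightarrow> bool" where
  "lyndon w \<longleftrightarrow> w \<noteq> [] \<and> (\<forall>u v. w = u @ v \<and> u \<noteq> [] \<and> v \<noteq> [] \<longrightarrow> word_less w v)"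

definition dominant_lyndon :: "('i \<Rightarrow> bool) \<Rightarrow> ('i \<Rightarrow> 'i \<Rightarrow> int) \<Rightarrow> 'i::linorder list \<Rightarrow> bool" where
  "dominant_lyndon p B w \<longleftrightarrow> dominant p B w \<and> lyndon w"

definition isotropic_odd :: "('i \<Rightarrow> bool) \<Rightarrow> ('i \<Rightarrow> 'i \<Rightarrow> int) \<Rightarrow> 'i list \<Rightarrow> bool" where
  "isotropic_odd p B w \<longleftrightarrow> odd (nodd p w) \<and> form_wt B w w = 0"

end

theory Submission
  imports Defs "HOL-Library.List_Lexorder"
begin

(*
  Let u, v be elements of U with max u = i and max v = j. Then the quantum shuffle u * v lies in U,
  and its largest word is ij. Every word occurring in u * v occurs in the shuffle of some words
  x <= i and y <= j. Since i is Lyndon, a shuffle of two words that do not overtake i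
  lexicographically does not overtake i either, and if it begins with i then one of the two words
  begins with i: a Lyndon word is never a shuffle of two of its nonempty proper prefixes. Hence all
  these words are smaller than ij, except ij itself, which arises only from x = i and y = j.
  Peeling off last letters, the coefficient of ij in the shuffle of i and j is the monomial
  pi^(p(i) p(j)) q^(-(|i|,|j|)) if j < i, and 1 + pi^p(i) q^(-(|i|,|i|)) if j = i; the latter
  vanishes only when |i| is isotropic odd.
*)

section \<open>Lexicographic order on words\<close>

lemma word_less_iff_less: "word_less x y \<longleftrightarrow> x < y"
  by (simp add: word_less_def list_less_def)

lemma less_list_take_index_conv:
  fixes x y :: "'a::linorder list"
  shows "x < y \<longleftrightarrow> (length x < length y \<and> take (length x) y = x) \<or>
    (\<exists>m < length x. m < length y \<and> take m x = take m y \<and> x!m < y!m)"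
  by (auto simp: list_less_def lexord_take_index_conv)

lemma less_append_self: "c \<noteq> [] \<Longrightarrow> (a::'a::linorder list) < a @ c"
  by (simp add: less_list_take_index_conv)

lemma le_append_self: "(a::'a::linorder list) \<le> a @ c"
  using less_append_self[of c a] by (cases "c = []") auto

lemma append_le_self_iff: "(a::'a::linorder list) @ c \<le> a \<longleftrightarrow> c = []"
  using less_append_self[of c a] by (auto dest: leD)

(* \<not> lex_exceeds a z holds if and only if take (length a) z \<le> a. *)
definition lex_exceeds :: "'a::linorder list \<Rightarrow> 'a list \<Rightarrow> bool" where
  "lex_exceeds a z \<longleftrightarrow> (\<exists>m < length a. m < length z \<and> take m z = take m a \<and> a!m < z!m)"

lemma lex_exceeds_less: "lex_exceeds a z \<Longrightarrow> a < z"
  unfolding lex_exceeds_def less_list_take_index_conv by metis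

lemma le_imp_not_lex_exceeds: "z \<le> a \<Longrightarrow> \<not> lex_exceeds a z"
  using lex_exceeds_less by fastforce

lemma not_lex_exceeds_take: "\<not> lex_exceeds a z \<Longrightarrow> \<not> lex_exceeds a (take k z)"
  unfolding lex_exceeds_def by (auto simp: min_def split: if_splits)

lemma not_lex_exceeds_append_self: "x @ c = a \<Longrightarrow> \<not> lex_exceeds a x"
  using le_imp_not_lex_exceeds le_append_self by blast

lemma not_lex_exceeds_nth_le:
  assumes "\<not> lex_exceeds a z" "take i z = take i a" "i < length z" "i < length a"
  shows "z!i \<le> a!i"
  using assms unfolding lex_exceeds_def by (metis not_le)

lemma not_lex_exceeds_less_append:
  fixes a w :: "'a::linorder list"
  assumes "\<not> lex_exceeds a w" "take (length a) w \<noteq> a"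
  shows "w < a @ c"
proof -
  have "\<not> a < take (length a) w"
  proof
    assume "a < take (length a) w"
    then obtain m where "m < length a" "m < length (take (length a) w)"
        "take m a = take m (take (length a) w)" "a!m < take (length a) w ! m"
      unfolding less_list_take_index_conv by auto
    then have "lex_exceeds a w" unfolding lex_exceeds_def by (intro exI[of _ m]) simp
    with assms(1) show False ..
  qed
  with assms(2) have "take (length a) w < a" by auto
  then consider "length (take (length a) w) < length a" "take (length (take (length a) w)) a = take (length a) w"
    | m where "m < length (take (length a) w)" "m < length a"
        "take m (take (length a) w) = take m a" "take (length a) w ! m < a!m"
    unfolding less_list_take_index_conv by blast
  then show ?thesis
  proof cases
    case 1
    then have "length w < length a" "take (length w) a = w" by (simp_all add: min_def split: if_splits)
    then show ?thesis unfolding less_list_take_index_conv by simp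
  next
    case (2 m)
    then show ?thesis unfolding less_list_take_index_conv
      by (intro disjI2 exI[of _ m]) (simp add: nth_append)
  qed
qed

lemma append_less_append_left: "(y::'a::linorder list) < b \<Longrightarrow> a @ y < a @ b"
  unfolding list_less_def by (rule lexord_append_leftI)

section \<open>Shuffles of lists\<close>

lemma append_in_shuffles_leftI: "w \<in> shuffles xs ys \<Longrightarrow> w @ v \<in> shuffles (xs @ v) ys"
proof (induction xs ys arbitrary: w rule: shuffles.induct)
  case (1 ys)
  have "ys @ v \<in> shuffles ys v"
    by (induction ys) (auto intro: Cons_in_shuffles_leftI)
  with 1 show ?case by (simp add: shuffles_commutes)
next
  case (3 x xs y ys)
  then show ?case by (auto intro: Cons_in_shuffles_leftI Cons_in_shuffles_rightI)
qed simp

lemma append_in_shuffles_rightI: "w \<in> shuffles xs ys \<Longrightarrow> w @ v \<in> shuffles xs (ys @ v)"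
  using append_in_shuffles_leftI[of w ys xs v] by (simp add: shuffles_commutes)

lemma append_in_shufflesE:
  assumes "u @ v \<in> shuffles xs ys"
  obtains i j where "i \<le> length xs" "j \<le> length ys"
    "u \<in> shuffles (take i xs) (take j ys)" "v \<in> shuffles (drop i xs) (drop j ys)"
  using assms
proof (induction u arbitrary: xs ys thesis)
  case Nil
  then show ?case by force
next
  case (Cons c u)
  from Cons.prems(2) consider
      xs' where "xs = c # xs'" "u @ v \<in> shuffles xs' ys"
    | ys' where "ys = c # ys'" "u @ v \<in> shuffles xs ys'"
    by (metis Cons_in_shuffles_iff append_Cons list.collapse)
  then show ?case
  proof cases
    case (1 xs')
    obtain i j where "i \<le> length xs'" "j \<le> length ys"
        "u \<in> shuffles (take i xs') (take j ys)" "v \<in> shuffles (drop i xs') (drop j ys)"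
      using Cons.IH[OF _ 1(2)] by blast
    with 1 show ?thesis
      by (intro Cons.prems(1)[of "Suc i" j]) (auto intro: Cons_in_shuffles_leftI)
  next
    case (2 ys')
    obtain i j where "i \<le> length xs" "j \<le> length ys'"
        "u \<in> shuffles (take i xs) (take j ys')" "v \<in> shuffles (drop i xs) (drop j ys')"
      using Cons.IH[OF _ 2(2)] by blast
    with 2 show ?thesis
      by (intro Cons.prems(1)[of i "Suc j"]) (auto intro: Cons_in_shuffles_rightI)
  qed
qed

lemma snoc_in_shufflesE:
  assumes "z @ [c] \<in> shuffles xs ys"
  obtains "xs \<noteq> []" "last xs = c" "z \<in> shuffles (butlast xs) ys"
    | "ys \<noteq> []" "last ys = c" "z \<in> shuffles xs (butlast ys)"
proof -
  obtain i j where ij: "i \<le> length xs" "j \<le> length ys"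
      "z \<in> shuffles (take i xs) (take j ys)" "[c] \<in> shuffles (drop i xs) (drop j ys)"
    using append_in_shufflesE[OF assms] .
  from ij(4) consider "drop i xs = [c]" "drop j ys = []" | "drop i xs = []" "drop j ys = [c]"
    by (cases "drop i xs"; cases "drop j ys") (auto simp: Cons_in_shuffles_iff)
  then show thesis
  proof cases
    case 1
    then have "xs = take i xs @ [c]" "take j ys = ys" by (metis append_take_drop_id, simp)
    with ij(3) show thesis by (intro that(1)) (metis snoc_eq_iff_butlast)+
  next
    case 2
    then have "ys = take j ys @ [c]" "take i xs = xs" by (metis append_take_drop_id, simp)
    with ij(3) show thesis by (intro that(2)) (metis snoc_eq_iff_butlast)+
  qed
qed

lemma in_shuffles_first_of_right:
  assumes "z \<in> shuffles xs ys" "ys \<noteq> []"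
  obtains k z' where "k \<le> length xs" "z = take k xs @ hd ys # z'" "z' \<in> shuffles (drop k xs) (tl ys)"
  using assms
proof (induction xs arbitrary: z thesis)
  case Nil
  then show ?case by (cases ys) auto
next
  case (Cons x xs)
  from Cons.prems(2,3) consider
      z1 where "z = x # z1" "z1 \<in> shuffles xs ys"
    | z1 where "z = hd ys # z1" "z1 \<in> shuffles (x # xs) (tl ys)"
    by (cases z) (auto simp: Cons_in_shuffles_iff)
  then show ?case
  proof cases
    case (1 z1)
    obtain k z' where "k \<le> length xs" "z1 = take k xs @ hd ys # z'" "z' \<in> shuffles (drop k xs) (tl ys)"
      using Cons.IH[OF _ 1(2) Cons.prems(3)] by blast
    with 1 show ?thesis by (intro Cons.prems(1)[of "Suc k" z']) auto
  next
    case (2 z1)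
    then show ?thesis by (intro Cons.prems(1)[of 0 z1]) auto
  qed
qed

lemma in_shuffles_nth_split:
  assumes "z \<in> shuffles xs ys" "n < length z"
  obtains i j where "i + j = n" "i \<le> length xs" "j \<le> length ys"
    "take n z \<in> shuffles (take i xs) (take j ys)"
    "i < length xs \<and> z!n = xs!i \<or> j < length ys \<and> z!n = ys!j"
proof -
  obtain i j where ij: "i \<le> length xs" "j \<le> length ys"
      "take n z \<in> shuffles (take i xs) (take j ys)" "drop n z \<in> shuffles (drop i xs) (drop j ys)"
    using assms(1) by (metis append_take_drop_id append_in_shufflesE)
  have "z!n # drop (Suc n) z \<in> shuffles (drop i xs) (drop j ys)"
    using ij(4) assms(2) by (simp add: Cons_nth_drop_Suc)
  then have "i < length xs \<and> z!n = xs!i \<or> j < length ys \<and> z!n = ys!j"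
    by (auto simp: Cons_in_shuffles_iff hd_drop_conv_nth)
  moreover have "i + j = n" using length_shuffles[OF ij(3)] ij(1,2) assms(2) by simp
  ultimately show thesis using that ij by blast
qed

section \<open>Shuffles of prefixes of a Lyndon word\<close>

lemma lyndon_snocE:
  assumes "lyndon a"
  obtains a' m where "a = a' @ [m]"
proof -
  have "a \<noteq> []" using assms by (simp add: lyndon_def)
  then show thesis using that rev_exhaust[of a] by blast
qed

lemma lyndon_less_drop:
  assumes "lyndon a" "0 < k" "k < length a"
  shows "a < drop k a"
proof -
  have "take k a \<noteq> []" "drop k a \<noteq> []" using assms(2,3) by auto
  then show ?thesis
    using assms(1) append_take_drop_id[of k a] unfolding lyndon_def word_less_iff_less
    by (metis (no_types))
qed

lemma lyndon_border_mismatch: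
  assumes "lyndon a" "0 < k" "k < length a"
  obtains \<mu> where "k + \<mu> < length a" "take \<mu> (drop k a) = take \<mu> a" "a!\<mu> < a!(k + \<mu>)"
proof -
  have "\<not> length a < length (drop k a)" by simp
  with lyndon_less_drop[OF assms] obtain m where
    "m < length (drop k a)" "take m a = take m (drop k a)" "a!m < drop k a ! m"
    unfolding less_list_take_index_conv by blast
  with assms(3) show thesis by (intro that[of m]) auto
qed

lemma take_drop_eq_take_nth:
  assumes "take \<mu> (drop k a) = take \<mu> a" "m < \<mu>" "k + m < length a"
  shows "a!(k + m) = a!m"
proof -
  have "take \<mu> (drop k a) ! m = a!(k + m)" using assms(2,3) by simp
  moreover have "take \<mu> a ! m = a!m" using assms(2) by simp
  ultimately show ?thesis using assms(1) by simp
qed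

lemma take_drop_eq_take_le:
  assumes "take \<mu> (drop k a) = take \<mu> a" "m \<le> \<mu>"
  shows "take m (drop k a) = take m a"
  by (metis assms min.absorb1 take_take)

lemma lyndon_hd_le_nth:
  assumes "lyndon a" "t < length a"
  shows "a!0 \<le> a!t"
proof (cases "t = 0")
  case False
  with assms obtain \<mu> where \<mu>: "t + \<mu> < length a" "take \<mu> (drop t a) = take \<mu> a" "a!\<mu> < a!(t + \<mu>)"
    by (elim lyndon_border_mismatch) auto
  show ?thesis
  proof (cases "\<mu> = 0")
    case False
    then show ?thesis using take_drop_eq_take_nth[OF \<mu>(2), of 0] \<mu>(1) by simp
  qed (use \<mu> in simp)
qed simp

(* The invariant which keeps shuffles of words not overtaking a Lyndon word a below a. *)
definition next_letter_dominates :: "'a::linorder list \<Rightarrow> nat \<Rightarrow> bool" where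
  "next_letter_dominates a s \<longleftrightarrow>
     (\<forall>i j. i + j = s \<longrightarrow> take s a \<in> shuffles (take i a) (take j a) \<longrightarrow>
        a!i \<le> a!s \<and> a!j \<le> a!s)"

(* In the next three lemmas the first k letters of a shuffle of two prefixes of a come from the
  first prefix and the next one is the first letter a!0 of the second. The Lyndon property
  compares the suffix drop k a with a, up to their first mismatch at position \<mu>. *)
lemma lyndon_prefix_shuffle_short_border:
  assumes s: "s \<le> length a" and ij: "i + j = s" and "k \<le> i" and "0 < j"
    and u: "drop k (take s a) = a!0 # z" and z: "z \<in> shuffles (drop k (take i a)) (tl (take j a))"
    and \<mu>: "k + \<mu> < s" "take \<mu> (drop k a) = take \<mu> a" "a!\<mu> < a!(k + \<mu>)"
    and dom: "next_letter_dominates a \<mu>"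
  shows False
proof -
  have u': "a!0 # z = take (s - k) (drop k a)" using u by (simp add: drop_take)
  have "\<mu> \<noteq> 0"
  proof
    assume "\<mu> = 0"
    have "(a!0 # z)!0 = take (s - k) (drop k a) ! 0" using u' by simp
    with \<mu>(1,3) s \<open>\<mu> = 0\<close> show False by simp
  qed
  have "length z = s - k - 1" using arg_cong[OF u', of length] s by simp
  with \<mu>(1) \<open>\<mu> \<noteq> 0\<close> have "\<mu> - 1 < length z" by simp
  then obtain i' j' where ij': "i' + j' = \<mu> - 1"
      "i' \<le> length (drop k (take i a))" "j' \<le> length (tl (take j a))"
      "take (\<mu> - 1) z \<in> shuffles (take i' (drop k (take i a))) (take j' (tl (take j a)))"
      "i' < length (drop k (take i a)) \<and> z!(\<mu> - 1) = drop k (take i a) ! i' \<or>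
       j' < length (tl (take j a)) \<and> z!(\<mu> - 1) = tl (take j a) ! j'"
    by (rule in_shuffles_nth_split[OF z])
  have "z!(\<mu> - 1) = (a!0 # z)!\<mu>" using \<open>\<mu> \<noteq> 0\<close> by simp
  with u' \<mu>(1) s have next_letter: "z!(\<mu> - 1) = a!(k + \<mu>)" by simp
  have "i' \<le> i - k" using ij'(2) s ij by simp
  then have "take i' (drop k (take i a)) = take i' (drop k a)" by (simp add: drop_take)
  also have "\<dots> = take i' a" using take_drop_eq_take_le[OF \<mu>(2), of i'] ij'(1) by simp
  finally have X: "take i' (drop k (take i a)) = take i' a" .
  have Y: "a!0 # take j' (tl (take j a)) = take (Suc j') a"
    using ij'(3) \<open>0 < j\<close> s ij by (cases a; cases j) (auto simp: min_def split: if_splits)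
  have "take \<mu> a = take \<mu> (drop k a)" using \<mu>(2) by simp
  also have "\<dots> = take \<mu> (a!0 # z)" using u' \<mu>(1) by (simp add: min_def)
  also have "\<dots> = a!0 # take (\<mu> - 1) z" using \<open>\<mu> \<noteq> 0\<close> by (cases \<mu>) auto
  finally have "take \<mu> a \<in> shuffles (take i' a) (take (Suc j') a)"
    using Cons_in_shuffles_rightI[OF ij'(4), of "a!0"] X Y by simp
  moreover have "i' + Suc j' = \<mu>" using ij'(1) \<open>\<mu> \<noteq> 0\<close> by simp
  ultimately have "a!i' \<le> a!\<mu>" "a!(Suc j') \<le> a!\<mu>"
    using dom unfolding next_letter_dominates_def by blast+
  moreover have "drop k (take i a) ! i' = a!i'" if "i' < length (drop k (take i a))"
  proof -
    have "drop k (take i a) ! i' = a!(k + i')" using that \<open>k \<le> i\<close> s ij by simp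
    also have "\<dots> = a!i'" using take_drop_eq_take_nth[OF \<mu>(2), of i'] that ij'(1) \<open>\<mu> \<noteq> 0\<close> by simp
    finally show ?thesis .
  qed
  moreover have "tl (take j a) ! j' = a!(Suc j')" if "j' < length (tl (take j a))"
    using that by (simp add: nth_tl)
  ultimately have "z!(\<mu> - 1) \<le> a!\<mu>" using ij'(5) by auto
  with next_letter \<mu>(3) show False by simp
qed

lemma lyndon_prefix_shuffle_long_border:
  assumes ij: "i + j = s" and "0 < k" "k \<le> i" "0 < j"
    and u: "drop k (take s a) \<in> shuffles (drop k (take i a)) (take j a)"
    and \<mu>: "s \<le> k + \<mu>" "k + \<mu> < length a" "take \<mu> (drop k a) = take \<mu> a" "a!\<mu> < a!(k + \<mu>)"
    and dom: "next_letter_dominates a (s - k)"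
  shows "a!i \<le> a!s \<and> a!j \<le> a!s"
proof -
  have "drop k (take s a) = take (s - k) a"
    using take_drop_eq_take_le[OF \<mu>(3), of "s - k"] \<mu>(1) by (simp add: drop_take)
  moreover have "drop k (take i a) = take (i - k) a"
    using take_drop_eq_take_le[OF \<mu>(3), of "i - k"] \<mu>(1) ij by (simp add: drop_take)
  ultimately have "take (s - k) a \<in> shuffles (take (i - k) a) (take j a)" using u by simp
  moreover have "(i - k) + j = s - k" using ij \<open>k \<le> i\<close> by simp
  ultimately have le: "a!(i - k) \<le> a!(s - k)" "a!j \<le> a!(s - k)"
    using dom unfolding next_letter_dominates_def by blast+
  have "a!(s - k) \<le> a!s"
  proof (cases "s - k < \<mu>")
    case True
    then show ?thesis
      using take_drop_eq_take_nth[OF \<mu>(3) True] \<mu>(2) ij \<open>k \<le> i\<close> by simp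
  next
    case False
    then have "s = k + \<mu>" "s - k = \<mu>" using \<mu>(1) ij \<open>k \<le> i\<close> by auto
    then show ?thesis using \<mu>(4) by simp
  qed
  moreover have "a!i = a!(i - k)"
    using take_drop_eq_take_nth[OF \<mu>(3), of "i - k"] \<mu>(1,2) ij \<open>k \<le> i\<close> \<open>0 < j\<close> by simp
  ultimately show ?thesis using le by auto
qed

lemma lyndon_prefix_shuffle_step_left:
  assumes ly: "lyndon a" and s: "s \<le> length a" and ij: "i + j = s" and "0 < i" "0 < j"
    and first: "tl (take s a) \<in> shuffles (tl (take i a)) (take j a)"
    and IH: "\<And>r. r < s \<Longrightarrow> next_letter_dominates a r"
  shows "s < length a \<and> a!i \<le> a!s \<and> a!j \<le> a!s"
proof -
  have hd_take: "take n a = a!0 # tl (take n a)" if "0 < n" "n \<le> length a" for n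
    using that by (cases a; cases n) auto
  have i: "take i a = a!0 # tl (take i a)" and j: "take j a = a!0 # tl (take j a)"
    using hd_take \<open>0 < i\<close> \<open>0 < j\<close> s ij by auto
  obtain k' z where k': "k' \<le> length (tl (take i a))"
      "tl (take s a) = take k' (tl (take i a)) @ a!0 # z"
      "z \<in> shuffles (drop k' (tl (take i a))) (tl (take j a))"
    using in_shuffles_first_of_right[OF first] j by (metis list.sel(1) list.distinct(1))
  define k where "k = Suc k'"
  have k: "0 < k" "k \<le> i" using k'(1) \<open>0 < i\<close> s ij by (auto simp: k_def)
  have "take s a = a!0 # tl (take s a)" using hd_take \<open>0 < i\<close> s ij by simp
  also have "\<dots> = take k (a!0 # tl (take i a)) @ a!0 # z" using k'(2) by (simp add: k_def)
  finally have "take s a = take k (take i a) @ a!0 # z" by (simp only: i[symmetric])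
  then have u: "drop k (take s a) = a!0 # z" using k s ij by simp
  have z: "z \<in> shuffles (drop k (take i a)) (tl (take j a))"
    using k'(3) by (simp add: k_def drop_Suc)
  obtain \<mu> where \<mu>: "k + \<mu> < length a" "take \<mu> (drop k a) = take \<mu> a" "a!\<mu> < a!(k + \<mu>)"
    using lyndon_border_mismatch[OF ly k(1)] k(2) \<open>0 < j\<close> s ij by auto
  show ?thesis
  proof (cases "k + \<mu> < s")
    case True
    with lyndon_prefix_shuffle_short_border[OF s ij k(2) \<open>0 < j\<close> u z True \<mu>(2,3)] IH
    show ?thesis by simp
  next
    case False
    then have "s \<le> k + \<mu>" by simp
    have "drop k (take s a) \<in> shuffles (drop k (take i a)) (take j a)"
      using Cons_in_shuffles_rightI[OF z, of "a!0"] u by (simp only: j[symmetric])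
    moreover have "next_letter_dominates a (s - k)" using IH k ij \<open>0 < j\<close> by simp
    ultimately have "a!i \<le> a!s \<and> a!j \<le> a!s"
      using lyndon_prefix_shuffle_long_border[OF ij k \<open>0 < j\<close> _ \<open>s \<le> k + \<mu>\<close> \<mu>] by blast
    then show ?thesis using \<open>s \<le> k + \<mu>\<close> \<mu>(1) by simp
  qed
qed

lemma lyndon_prefix_shuffle_step:
  assumes ly: "lyndon a" and s: "s \<le> length a" and ij: "i + j = s" and "0 < i" "0 < j"
    and sh: "take s a \<in> shuffles (take i a) (take j a)"
    and IH: "\<And>r. r < s \<Longrightarrow> next_letter_dominates a r"
  shows "s < length a \<and> a!i \<le> a!s \<and> a!j \<le> a!s"
proof -
  have "take s a = a!0 # tl (take s a)" using s ij \<open>0 < i\<close> by (cases a; cases s) auto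
  with sh have "tl (take s a) \<in> shuffles (tl (take i a)) (take j a) \<or>
      tl (take s a) \<in> shuffles (tl (take j a)) (take i a)"
    by (metis Cons_in_shuffles_iff shuffles_commutes)
  then show ?thesis
  proof
    assume "tl (take s a) \<in> shuffles (tl (take j a)) (take i a)"
    with lyndon_prefix_shuffle_step_left[OF ly s _ \<open>0 < j\<close> \<open>0 < i\<close> _ IH] ij show ?thesis by auto
  qed (use lyndon_prefix_shuffle_step_left[OF ly s ij \<open>0 < i\<close> \<open>0 < j\<close> _ IH] in auto)
qed

lemma lyndon_next_letter_dominates:
  assumes ly: "lyndon a"
  shows "s < length a \<Longrightarrow> next_letter_dominates a s"
proof (induction s rule: less_induct)
  case (less s)
  show ?case unfolding next_letter_dominates_def
  proof (intro allI impI)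
    fix i j assume ij: "i + j = s" and sh: "take s a \<in> shuffles (take i a) (take j a)"
    show "a!i \<le> a!s \<and> a!j \<le> a!s"
    proof (cases "i = 0 \<or> j = 0")
      case True
      then show ?thesis using ij lyndon_hd_le_nth[OF ly less.prems] by auto
    next
      case False
      then show ?thesis
        using lyndon_prefix_shuffle_step[OF ly _ ij _ _ sh] less by auto
    qed
  qed
qed

lemma lyndon_not_in_shuffles_prefixes:
  assumes "lyndon a" "i + j = length a" "0 < i" "0 < j"
  shows "a \<notin> shuffles (take i a) (take j a)"
  using lyndon_prefix_shuffle_step[OF assms(1) order_refl assms(2-4)]
    lyndon_next_letter_dominates[OF assms(1)] by auto

lemma lyndon_shuffle_prefix_extend:
  assumes ly: "lyndon a" and t: "t < length a"
    and sh: "take t a \<in> shuffles (take i a) (take j a)"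
    and "\<not> lex_exceeds a (take i a @ [a!t])"
  shows "take i a @ [a!t] = take (Suc i) a"
proof -
  have ij: "i + j = t" using length_shuffles[OF sh] t by (auto simp: min_def split: if_splits)
  then have "a!i \<le> a!t"
    using lyndon_next_letter_dominates[OF ly t] sh unfolding next_letter_dominates_def by blast
  moreover have "(take i a @ [a!t])!i \<le> a!i"
    using not_lex_exceeds_nth_le[OF assms(4)] ij t by (simp add: min_def)
  moreover have "(take i a @ [a!t])!i = a!t" using ij t by (simp add: nth_append)
  ultimately have "a!t = a!i" by simp
  then show ?thesis using ij t by (simp add: take_Suc_conv_app_nth)
qed

lemma lyndon_prefix_in_shuffles:
  assumes ly: "lyndon a"
  shows "t \<le> length a \<Longrightarrow> take t a \<in> shuffles x y \<Longrightarrow>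
    \<not> lex_exceeds a x \<Longrightarrow> \<not> lex_exceeds a y \<Longrightarrow>
    x = take (length x) a \<and> y = take (length y) a"
proof (induction t arbitrary: x y)
  case (Suc t)
  have t: "t < length a" using Suc.prems(1) by simp
  have last_left: "x' = take (length x') a \<and> y' = take (length y') a"
    if x': "x' \<noteq> []" "last x' = a!t" "\<not> lex_exceeds a x'"
      and sh: "take t a \<in> shuffles (butlast x') y'" and y': "\<not> lex_exceeds a y'" for x' y'
  proof -
    have "\<not> lex_exceeds a (butlast x')"
      using x'(3) not_lex_exceeds_take by (metis butlast_conv_take)
    with Suc.IH[OF less_imp_le[OF t] sh] y'
    have IH: "butlast x' = take (length (butlast x')) a" "y' = take (length y') a" by blast+
    define i where "i = length (butlast x')"
    have "x' = take i a @ [a!t]" using x'(1,2) IH(1) unfolding i_def by (metis append_butlast_last_id)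
    moreover have "take t a \<in> shuffles (take i a) (take (length y') a)"
      using sh IH unfolding i_def by metis
    ultimately have "x' = take (Suc i) a" using lyndon_shuffle_prefix_extend[OF ly t] x'(3) by metis
    then have "x' = take (length x') a" by (simp add: min_def)
    with IH(2) show ?thesis by blast
  qed
  have "take t a @ [a!t] \<in> shuffles x y" using t Suc.prems(2) by (simp add: take_Suc_conv_app_nth)
  then show ?case
  proof (rule snoc_in_shufflesE)
    assume "x \<noteq> []" "last x = a!t" "take t a \<in> shuffles (butlast x) y"
    with last_left Suc.prems(3,4) show ?thesis by blast
  next
    assume "y \<noteq> []" "last y = a!t" "take t a \<in> shuffles x (butlast y)"
    with last_left[of y x] Suc.prems(3,4) show ?thesis by (simp add: shuffles_commutes)
  qed
qed simp

lemma lyndon_shuffle_not_lex_exceeds: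
  assumes ly: "lyndon a" and sh: "z \<in> shuffles x y"
    and x: "\<not> lex_exceeds a x" and y: "\<not> lex_exceeds a y"
  shows "\<not> lex_exceeds a z"
proof
  assume "lex_exceeds a z"
  then obtain m where m: "m < length a" "m < length z" "take m z = take m a" "a!m < z!m"
    unfolding lex_exceeds_def by blast
  obtain i j where ij: "i + j = m" "i \<le> length x" "j \<le> length y"
      "take m z \<in> shuffles (take i x) (take j y)"
      "i < length x \<and> z!m = x!i \<or> j < length y \<and> z!m = y!j"
    using in_shuffles_nth_split[OF sh m(2)] .
  have "take i x = take i a" "take j y = take j a"
    using lyndon_prefix_in_shuffles[OF ly less_imp_le[OF m(1)], of "take i x" "take j y"]
      ij(2-4) m(3) not_lex_exceeds_take[OF x] not_lex_exceeds_take[OF y] by (simp_all add: min_def)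
  then have "a!i \<le> a!m" "a!j \<le> a!m"
    using ij(1,4) m(3) lyndon_next_letter_dominates[OF ly m(1)]
    unfolding next_letter_dominates_def by auto
  moreover have "x!i \<le> a!i" if "i < length x"
    using not_lex_exceeds_nth_le[OF x \<open>take i x = take i a\<close> that] ij(1) m(1) by simp
  moreover have "y!j \<le> a!j" if "j < length y"
    using not_lex_exceeds_nth_le[OF y \<open>take j y = take j a\<close> that] ij(1) m(1) by simp
  ultimately have "z!m \<le> a!m" using ij(5) by auto
  with m(4) show False by simp
qed

lemma lyndon_prefix_in_shufflesE:
  assumes ly: "lyndon a" and sh: "a @ v \<in> shuffles x y"
    and x: "\<not> lex_exceeds a x" and y: "\<not> lex_exceeds a y"
  obtains x' where "x = a @ x'" "v \<in> shuffles x' y"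
    | y' where "y = a @ y'" "v \<in> shuffles x y'"
proof -
  from sh obtain i j where ij: "i \<le> length x" "j \<le> length y"
      "a \<in> shuffles (take i x) (take j y)" "v \<in> shuffles (drop i x) (drop j y)"
    by (elim append_in_shufflesE)
  have "take i x = take i a" "take j y = take j a"
    using lyndon_prefix_in_shuffles[OF ly order_refl, of "take i x" "take j y"]
      ij(1-3) not_lex_exceeds_take[OF x] not_lex_exceeds_take[OF y] by (simp_all add: min_def)
  moreover have "i + j = length a" using length_shuffles[OF ij(3)] ij(1,2) by simp
  ultimately consider "j = 0" "take (length a) x = a" | "i = 0" "take (length a) y = a"
    using lyndon_not_in_shuffles_prefixes[OF ly] ij(3) by fastforce
  then show thesis
  proof cases
    case 1
    then show thesis using ij(4) \<open>i + j = length a\<close> by (intro that(1)[of "drop i x"]) (auto, metis append_take_drop_id)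
  next
    case 2
    then show thesis using ij(4) \<open>i + j = length a\<close> by (intro that(2)[of "drop j y"]) (auto, metis append_take_drop_id)
  qed
qed

lemma lyndon_shuffle_le_append:
  assumes ly: "lyndon a" and "x \<le> a" "y \<le> b" "b \<le> a" and sh: "w \<in> shuffles x y"
  shows "w < a @ b \<or> (w = a @ b \<and> x = a \<and> y = b)"
proof -
  have x: "\<not> lex_exceeds a x" using assms(2) le_imp_not_lex_exceeds by blast
  have y: "\<not> lex_exceeds a y" using assms(3,4) le_imp_not_lex_exceeds order.trans by blast
  show ?thesis
  proof (cases "take (length a) w = a")
    case False
    then show ?thesis
      using not_lex_exceeds_less_append lyndon_shuffle_not_lex_exceeds[OF ly sh x y] by blast
  next
    case True
    then obtain u where w: "w = a @ u" by (metis append_take_drop_id)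
    then obtain v where v: "w = a @ v" "v \<le> b" "v = b \<longrightarrow> x = a \<and> y = b"
    proof -
      from sh w have "a @ u \<in> shuffles x y" by simp
      then show thesis
      proof (rule lyndon_prefix_in_shufflesE[OF ly _ x y])
        fix x' assume "x = a @ x'" "u \<in> shuffles x' y"
        moreover from this(1) have "x' = []" using \<open>x \<le> a\<close> by (simp add: append_le_self_iff)
        ultimately have "w = a @ y" "x = a" using w by simp_all
        then show thesis using that[of y] \<open>y \<le> b\<close> by blast
      next
        fix y' assume "y = a @ y'" "u \<in> shuffles x y'"
        moreover from this(1) have "y' = []" using order.trans[OF \<open>y \<le> b\<close> \<open>b \<le> a\<close>]
          by (simp add: append_le_self_iff)
        ultimately have "y = a" "u = x" by simp_all
        moreover from this(1) have "b = a" using \<open>y \<le> b\<close> \<open>b \<le> a\<close> by simp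
        ultimately show thesis using that[of x] w \<open>x \<le> a\<close> by blast
      qed
    qed
    then show ?thesis using append_less_append_left[of v b a] by (cases "v = b") auto
  qed
qed

section \<open>The quantum shuffle product\<close>

lemma qvar_power: "qvar ^ n = Fract ([:0, 1:] ^ n) 1"
  by (induction n) (simp_all add: qvar_def One_fract_def)

lemma qvar_nonzero: "qvar \<noteq> 0"
  by (simp add: qvar_def Zero_fract_def eq_fract)

lemma qvar_power_eq_constD:
  assumes "qvar ^ n = Fract [:c:] 1" "c \<noteq> 0"
  shows "n = 0"
proof -
  have "([:0, 1:] :: rat poly) ^ n = [:c:]" using assms(1) by (simp add: qvar_power eq_fract)
  then have "degree (([:0, 1:] :: rat poly) ^ n) = 0" by simp
  then show ?thesis by (simp add: degree_power_eq)
qed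

lemma power_int_qvar_eq_constD:
  assumes "power_int qvar k = Fract [:c:] 1" "c \<noteq> 0"
  shows "k = 0"
proof (cases "k \<ge> 0")
  case True
  then have "qvar ^ nat k = Fract [:c:] 1" using assms(1) by (simp add: power_int_def)
  then show ?thesis using qvar_power_eq_constD assms(2) True by fastforce
next
  case False
  then have "inverse (qvar ^ nat (- k)) = Fract [:c:] 1"
    using assms(1) by (simp add: power_int_def power_inverse)
  then have "qvar ^ nat (- k) = inverse (Fract [:c:] 1)" by (metis inverse_inverse_eq)
  also have "\<dots> = Fract [:inverse c:] 1" using assms(2) by (simp add: eq_fract)
  finally show ?thesis using qvar_power_eq_constD[of "nat (- k)" "inverse c"] assms(2) False by simp
qed

lemma power_int_qvar_neq_one: "k \<noteq> 0 \<Longrightarrow> power_int qvar k \<noteq> 1"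
  using power_int_qvar_eq_constD[of k 1] by (auto simp: One_fract_def one_pCons)

lemma power_int_qvar_neq_minus_one: "power_int qvar k \<noteq> -1"
proof
  assume *: "power_int qvar k = -1"
  then have "power_int qvar k = Fract [:-1:] 1" by (simp add: One_fract_def one_pCons)
  then have "k = 0" using power_int_qvar_eq_constD by fastforce
  with * show False by simp
qed

lemma shr_nonzero_in_shuffles: "shr p B xs ys w \<noteq> 0 \<Longrightarrow> w \<in> shuffles (rev xs) (rev ys)"
proof (induction p B xs ys arbitrary: w rule: shr.induct)
  case (3 p B i xs j ys)
  then have "app_letter (shr p B xs (j # ys)) i w \<noteq> 0 \<or> app_letter (shr p B (i # xs) ys) j w \<noteq> 0"
    by auto
  then show ?case
  proof
    assume "app_letter (shr p B xs (j # ys)) i w \<noteq> 0"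
    then have "w = butlast w @ [i]" "shr p B xs (j # ys) (butlast w) \<noteq> 0"
      by (auto simp: app_letter_def split: if_splits)
    with "3.IH"(1) show ?case by (metis append_in_shuffles_leftI rev.simps(2))
  next
    assume "app_letter (shr p B (i # xs) ys) j w \<noteq> 0"
    then have "w = butlast w @ [j]" "shr p B (i # xs) ys (butlast w) \<noteq> 0"
      by (auto simp: app_letter_def split: if_splits)
    with "3.IH"(2) show ?case by (metis append_in_shuffles_rightI rev.simps(2))
  qed
qed (auto simp: word_vec_def split: if_splits)

lemma shuffle_word_nonzero_in_shuffles: "shuffle_word p B x y w \<noteq> 0 \<Longrightarrow> w \<in> shuffles x y"
  using shr_nonzero_in_shuffles[of p B "rev x" "rev y" w] by (simp add: shuffle_word_def)

lemma finite_supp_shuffle_word: "finite (supp (shuffle_word p B x y))"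
  by (rule finite_subset[OF _ finite_shuffles[of x y]])
    (auto simp: supp_def dest: shuffle_word_nonzero_in_shuffles)

lemma shuffle_word_Nil_left: "shuffle_word p B [] y = word_vec y"
  by (simp add: shuffle_word_def)

lemma shuffle_word_Nil_right: "shuffle_word p B x [] = word_vec x"
  by (cases "rev x") (simp_all add: shuffle_word_def)

(* pi^(p(x) p(y)) q^(-(|x|,|y|)): the factor picked up when all of y is moved past x. *)
definition braid_coeff ::
    "('i \<Rightarrow> bool) \<Rightarrow> ('i \<Rightarrow> 'i \<Rightarrow> int) \<Rightarrow> 'i list \<Rightarrow> 'i list \<Rightarrow> qfield" where
  "braid_coeff p B x y =
     (if odd (nodd p x) \<and> odd (nodd p y) then -1 else 1) * power_int qvar (- form_wt B x y)"

lemma braid_coeff_Nil [simp]: "braid_coeff p B x [] = 1"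
  by (simp add: braid_coeff_def nodd_def form_wt_def)

lemma braid_coeff_nonzero: "braid_coeff p B x y \<noteq> 0"
  by (simp add: braid_coeff_def power_int_not_zero qvar_nonzero)

lemma braid_coeff_snoc: "braid_coeff p B x [l] * braid_coeff p B x y = braid_coeff p B x (y @ [l])"
proof -
  have "- form_wt B x (y @ [l]) = - form_wt B x [l] + - form_wt B x y"
    by (simp add: form_wt_def)
  then have "power_int qvar (- form_wt B x (y @ [l])) =
      power_int qvar (- form_wt B x [l]) * power_int qvar (- form_wt B x y)"
    by (metis power_int_add qvar_nonzero)
  then show ?thesis by (auto simp: braid_coeff_def nodd_def)
qed

lemma shuffle_word_snoc:
  "shuffle_word p B (x @ [i]) (y @ [j]) (w @ [k]) =
    (if k = i then shuffle_word p B x (y @ [j]) w else 0) +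
    (if k = j then braid_coeff p B (x @ [i]) [j] * shuffle_word p B (x @ [i]) y w else 0)"
proof -
  have "nodd p (i # rev x) = nodd p (x @ [i])"
    by (simp add: nodd_def rev_filter[symmetric])
  moreover have "form_wt_letter B (i # rev x) j = form_wt B (x @ [i]) [j]"
    by (simp add: form_wt_def form_wt_letter_def rev_map[symmetric])
  ultimately have "braid_coeff p B (x @ [i]) [j] = (if odd (nodd p (i # rev x)) \<and> p j then -1 else 1) *
      power_int qvar (- form_wt_letter B (i # rev x) j)"
    by (simp add: braid_coeff_def nodd_def)
  then show ?thesis unfolding shuffle_word_def by (simp add: app_letter_def)
qed

lemma lyndon_shuffle_word_prefix_append:
  assumes ly: "lyndon a"
  shows "x @ c = a \<Longrightarrow> c \<noteq> [] \<Longrightarrow> shuffle_word p B x a (a @ x) = 1"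
proof (induction x arbitrary: c rule: rev_induct)
  case Nil
  then show ?case by (simp add: shuffle_word_Nil_left word_vec_def)
next
  case (snoc l x)
  obtain a' m where a: "a = a' @ [m]" using lyndon_snocE[OF ly] .
  have "shuffle_word p B (x @ [l]) a' (a @ x) = 0"
  proof (rule ccontr)
    assume "shuffle_word p B (x @ [l]) a' (a @ x) \<noteq> 0"
    then have "a @ x \<in> shuffles (x @ [l]) a'" by (rule shuffle_word_nonzero_in_shuffles)
    moreover have "\<not> lex_exceeds a (x @ [l])" "\<not> lex_exceeds a a'"
      using not_lex_exceeds_append_self snoc.prems(1) a[symmetric] by blast+
    ultimately show False
    proof (rule lyndon_prefix_in_shufflesE[OF ly])
      fix x' assume "x @ [l] = a @ x'"
      then have "length (x @ [l]) = length (a @ x')" by simp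
      then show False using arg_cong[OF snoc.prems(1), of length] snoc.prems(2) by (cases c) simp_all
    next
      fix y' assume "a' = a @ y'"
      then have "length a' = length (a @ y')" by simp
      then show False using a by simp
    qed
  qed
  then have "shuffle_word p B (x @ [l]) a ((a @ x) @ [l]) = shuffle_word p B x a (a @ x)"
    using shuffle_word_snoc[of p B x l a' m "a @ x" l, folded a] by (cases "l = m") simp_all
  with snoc.IH[of "l # c"] snoc.prems show ?case by simp
qed

lemma lyndon_shuffle_word_append_less:
  assumes ly: "lyndon a"
  shows "y \<le> a \<Longrightarrow> y \<noteq> a \<Longrightarrow> shuffle_word p B a y (a @ y) = braid_coeff p B a y"
proof (induction y rule: rev_induct)
  case Nil
  then show ?case by (simp add: shuffle_word_Nil_right word_vec_def)
next
  case (snoc l y)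
  obtain a' m where a: "a = a' @ [m]" using lyndon_snocE[OF ly] .
  have "y \<le> a" using snoc.prems(1) le_append_self order.trans by blast
  moreover have "y \<noteq> a" using snoc.prems(1) append_le_self_iff by blast
  ultimately have IH: "shuffle_word p B a y (a @ y) = braid_coeff p B a y" by (rule snoc.IH)
  have "shuffle_word p B a' (y @ [l]) (a @ y) = 0"
  proof (rule ccontr)
    assume "shuffle_word p B a' (y @ [l]) (a @ y) \<noteq> 0"
    then have "a @ y \<in> shuffles a' (y @ [l])" by (rule shuffle_word_nonzero_in_shuffles)
    moreover have "\<not> lex_exceeds a a'" "\<not> lex_exceeds a (y @ [l])"
      using not_lex_exceeds_append_self a[symmetric] le_imp_not_lex_exceeds snoc.prems(1) by blast+
    ultimately show False
    proof (rule lyndon_prefix_in_shufflesE[OF ly])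
      fix x' assume "a' = a @ x'"
      then have "length a' = length (a @ x')" by simp
      then show False using a by simp
    next
      fix y' assume "y @ [l] = a @ y'"
      then show False using snoc.prems by (simp add: append_le_self_iff)
    qed
  qed
  then have "shuffle_word p B a (y @ [l]) ((a @ y) @ [l]) =
      braid_coeff p B a [l] * shuffle_word p B a y (a @ y)"
    using shuffle_word_snoc[of p B a' m y l "a @ y" l, folded a] by (cases "l = m") simp_all
  then show ?case using IH braid_coeff_snoc by simp
qed

lemma lyndon_shuffle_word_append_self:
  assumes ly: "lyndon a"
  shows "shuffle_word p B a a (a @ a) = 1 + braid_coeff p B a a"
proof -
  obtain a' m where a: "a = a' @ [m]" using lyndon_snocE[OF ly] .
  have "shuffle_word p B a' a (a @ a') = 1"
    using lyndon_shuffle_word_prefix_append[OF ly, of a' "[m]"] a by simp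
  moreover have "a' \<le> a" "a' \<noteq> a" using a le_append_self by auto
  then have "shuffle_word p B a a' (a @ a') = braid_coeff p B a a'"
    by (rule lyndon_shuffle_word_append_less[OF ly])
  moreover have "shuffle_word p B a a (a @ a) = shuffle_word p B a' a (a @ a') +
      braid_coeff p B a [m] * shuffle_word p B a a' (a @ a')"
    using shuffle_word_snoc[of p B a' m a' m "a @ a'" m, folded a] by (simp add: a)
  ultimately show ?thesis using braid_coeff_snoc[of p B a m a', folded a] by simp
qed

lemma lyndon_shuffle_word_append_nonzero:
  assumes ly: "lyndon a" and "b \<le> a" and "isotropic_odd p B a \<longrightarrow> a \<noteq> b"
  shows "shuffle_word p B a b (a @ b) \<noteq> 0"
proof (cases "b = a")
  case False
  then show ?thesis using lyndon_shuffle_word_append_less[OF ly assms(2)] braid_coeff_nonzero by simp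
next
  case True
  then have "odd (nodd p a) \<longrightarrow> form_wt B a a \<noteq> 0" using assms(3) by (auto simp: isotropic_odd_def)
  then have "braid_coeff p B a a \<noteq> -1"
    using power_int_qvar_neq_one[of "- form_wt B a a"] power_int_qvar_neq_minus_one[of "- form_wt B a a"]
    by (auto simp: braid_coeff_def)
  then show ?thesis using lyndon_shuffle_word_append_self[OF ly] True by (auto simp: add_eq_0_iff)
qed

section \<open>Leading words of quantum shuffles\<close>

lemma is_max_word_iff:
  "is_max_word f w \<longleftrightarrow> finite (supp f) \<and> f w \<noteq> 0 \<and> (\<forall>v. f v \<noteq> 0 \<longrightarrow> v \<le> w)"
  by (auto simp: is_max_word_def word_less_iff_less le_less)

lemma shuffle_nonzeroE:
  assumes "shuffle p B u v w \<noteq> 0"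
  obtains x y where "u x \<noteq> 0" "v y \<noteq> 0" "shuffle_word p B x y w \<noteq> 0"
proof -
  from assms obtain x where x: "x \<in> supp u" "(\<Sum>y\<in>supp v. u x * v y * shuffle_word p B x y w) \<noteq> 0"
    unfolding shuffle_def by (blast elim: sum.not_neutral_contains_not_neutral)
  from x(2) obtain y where "y \<in> supp v" "u x * v y * shuffle_word p B x y w \<noteq> 0"
    by (blast elim: sum.not_neutral_contains_not_neutral)
  with x(1) show thesis using that by (simp add: supp_def)
qed

lemma finite_supp_shuffle:
  assumes "finite (supp u)" "finite (supp v)"
  shows "finite (supp (shuffle p B u v))"
proof (rule finite_subset)
  show "supp (shuffle p B u v) \<subseteq> (\<Union>x\<in>supp u. \<Union>y\<in>supp v. supp (shuffle_word p B x y))"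
    by (auto simp: supp_def elim!: shuffle_nonzeroE)
  show "finite (\<Union>x\<in>supp u. \<Union>y\<in>supp v. supp (shuffle_word p B x y))"
    using assms finite_supp_shuffle_word by blast
qed

lemma shuffle_eq_single_term:
  assumes fin: "finite (supp u)" "finite (supp v)"
    and unique: "\<And>x y. u x \<noteq> 0 \<Longrightarrow> v y \<noteq> 0 \<Longrightarrow> shuffle_word p B x y w \<noteq> 0 \<Longrightarrow>
      x = a \<and> y = b"
  shows "shuffle p B u v w = u a * v b * shuffle_word p B a b w"
proof -
  define c where "c = u a * v b * shuffle_word p B a b w"
  have summand: "u x * v y * shuffle_word p B x y w = (if x = a then if y = b then c else 0 else 0)"
    if "x \<in> supp u" "y \<in> supp v" for x y
  proof (cases "x = a \<and> y = b")
    case False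
    with unique[of x y] that have "shuffle_word p B x y w = 0" unfolding supp_def by blast
    with False show ?thesis by auto
  qed (auto simp: c_def)
  have inner: "(\<Sum>y\<in>supp v. if x = a then if y = b then c else 0 else 0) = (if x = a then c else 0)" for x
    using fin(2) by (cases "v b = 0") (simp_all add: supp_def c_def)
  have "shuffle p B u v w = (\<Sum>x\<in>supp u. \<Sum>y\<in>supp v. u x * v y * shuffle_word p B x y w)"
    by (simp add: shuffle_def)
  also have "\<dots> = (\<Sum>x\<in>supp u. if x = a then c else 0)"
    using summand inner by (simp cong: sum.cong)
  also have "\<dots> = c"
    using fin(1) by (cases "u a = 0") (simp_all add: supp_def c_def)
  finally show ?thesis by (simp add: c_def)
qed

lemma is_max_word_shuffle:
  assumes u: "is_max_word u a" and v: "is_max_word v b"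
    and lead: "\<And>x y w. x \<le> a \<Longrightarrow> y \<le> b \<Longrightarrow> w \<in> shuffles x y \<Longrightarrow>
      w < a @ b \<or> (w = a @ b \<and> x = a \<and> y = b)"
    and nz: "shuffle_word p B a b (a @ b) \<noteq> 0"
  shows "is_max_word (shuffle p B u v) (a @ b)"
proof -
  have fin: "finite (supp u)" "finite (supp v)" and "u a \<noteq> 0" "v b \<noteq> 0"
    and le: "\<And>x. u x \<noteq> 0 \<Longrightarrow> x \<le> a" "\<And>y. v y \<noteq> 0 \<Longrightarrow> y \<le> b"
    using u v by (auto simp: is_max_word_iff)
  have lead': "w < a @ b \<or> (w = a @ b \<and> x = a \<and> y = b)"
    if "u x \<noteq> 0" "v y \<noteq> 0" "shuffle_word p B x y w \<noteq> 0" for x y w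
    using lead le that shuffle_word_nonzero_in_shuffles by blast
  then have "shuffle p B u v (a @ b) = u a * v b * shuffle_word p B a b (a @ b)"
    by (intro shuffle_eq_single_term[OF fin]) (meson order.irrefl)
  with \<open>u a \<noteq> 0\<close> \<open>v b \<noteq> 0\<close> nz have "shuffle p B u v (a @ b) \<noteq> 0" by simp
  moreover have "w \<le> a @ b" if "shuffle p B u v w \<noteq> 0" for w
    using that by (elim shuffle_nonzeroE) (auto dest: lead')
  ultimately show ?thesis using finite_supp_shuffle[OF fin] by (simp add: is_max_word_iff)
qed

theorem mainTheorem8:
  fixes p :: "'i::{linorder, finite} \<Rightarrow> bool"
    and B :: "'i \<Rightarrow> 'i \<Rightarrow> int"
    and wi wj :: "'i list"
  assumes "super_cartan_datum p B"
    and "dominant_lyndon p B wi"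
    and "dominant p B wj"
    and "wi = wj \<or> word_less wj wi"
    and "isotropic_odd p B wi \<longrightarrow> wi \<noteq> wj"
  shows "dominant p B (wi @ wj)"
proof -
  have ly: "lyndon wi" and "wj \<le> wi"
    using assms(2,4) by (auto simp: dominant_lyndon_def word_less_iff_less)
  obtain u where u: "u \<in> Ualg p B" "is_max_word u wi"
    using assms(2) by (auto simp: dominant_lyndon_def dominant_def)
  obtain v where v: "v \<in> Ualg p B" "is_max_word v wj"
    using assms(3) by (auto simp: dominant_def)
  have max: "is_max_word (shuffle p B u v) (wi @ wj)"
    using is_max_word_shuffle[OF u(2) v(2)] lyndon_shuffle_le_append[OF ly _ _ \<open>wj \<le> wi\<close>]
      lyndon_shuffle_word_append_nonzero[OF ly \<open>wj \<le> wi\<close> assms(5)] by blast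
  moreover from max have "shuffle p B u v \<noteq> (\<lambda>_. 0)" by (auto simp: is_max_word_def)
  moreover have "shuffle p B u v \<in> Ualg p B" using u(1) v(1) by (rule Ualg.mult)
  ultimately show ?thesis unfolding dominant_def by blast
qed

end
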